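(* For every $n\ge 1$ and every $w \in S_n$, $\operatorname{dep}(w) = \operatorname{ar}(\phi(w))$.
   Context: For $w\in S_n$, the depth is $\operatorname{dep}(w)=\sum_{i:\,w(i)>i}(w(i)-i)$, i.e. half the total displacement $\sum_{i=1}^n |w(i)-i|$. A Motzkin path of length $n$ is a word $p_1\cdots p_n$ in the letters $U,D,H$ such that the subword formed by the letters $U$ and $D$ is a balanced parenthesization; it is drawn as a lattice path from $(0,0)$ to $(n,0)$ with $U$ a step $(1,1)$, $D$ a step $(1,-1)$, $H$ a step $(1,0)$, never going below height $0$. Its area $\operatorname{ar}(p)$ is the area of the region between the line $y=0$ and the path. The map $\phi\colon S_n\to\{\text{Motzkin paths of length } n\}$ is defined by $\phi(w)=p_1\cdots p_n$ where $p_i=U$ if $w^{-1}(i)>i<w(i)$, $p_i=D$ if $w^{-1}(i)<i>w(i)$, and $p_i=H$ otherwise. *)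

theory Defs
  imports "HOL-Combinatorics.Permutations" Complex_Main
begin

text \<open>Permutations of S_n are functions w :: nat => nat with w permutes {1..n}.\<close>

definition dep :: "nat \<Rightarrow> (nat \<Rightarrow> nat) \<Rightarrow> nat" where
  "dep n w = (\<Sum>i\<in>{i\<in>{1..n}. w i > i}. w i - i)"

datatype step = U | D | H

text \<open>Motzkin words are lists of steps; the i-th letter (1-based) is position i-1.\<close>

definition phi :: "nat \<Rightarrow> (nat \<Rightarrow> nat) \<Rightarrow> step list" where
  "phi n w = map (\<lambda>i. if inv w i > i \<and> i < w i then U
                     else if inv w i < i \<and> i > w i then D
                     else H) [1..<n+1]"

definition step_val :: "step \<Rightarrow> int" where
  "step_val s = (case s of U \<Rightarrow> 1 | D \<Rightarrow> -1 | H \<Rightarrow> 0)"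

definition height :: "step list \<Rightarrow> nat \<Rightarrow> int" where
  "height p k = sum_list (map step_val (take k p))"

definition motzkin :: "step list \<Rightarrow> bool" where
  "motzkin p \<longleftrightarrow> height p (length p) = 0 \<and> (\<forall>k\<le>length p. height p k \<ge> 0)"

definition ar :: "step list \<Rightarrow> real" where
  "ar p = (\<Sum>k=1..length p. (of_int (height p (k-1)) + of_int (height p k)) / 2)"

end

theory Submission
  imports Defs
begin

text \<open>The height of \<open>\<phi>(w)\<close> after \<open>k\<close> steps counts the arcs \<open>i \<mapsto> w i\<close> with
  \<open>i \<le> k < w i\<close>: an up step opens such an arc and a down step closes one.
  Summing these counts over all gaps \<open>k\<close> counts every excedance \<open>w i > i\<close> exactly
  \<open>w i - i\<close> times, which is the depth. On the other hand, since the path starts and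
  ends at height 0, the trapezoidal area is the sum of the heights.\<close>

lemma height_0 [simp]: "height p 0 = 0"
  by (simp add: height_def)

lemma height_Suc:
  "k < length p \<Longrightarrow> height p (Suc k) = height p k + step_val (p ! k)"
  by (simp add: height_def take_Suc_conv_app_nth)

lemma ar_eq_sum_height:
  assumes "height p (length p) = 0"
  shows "ar p = (\<Sum>k=1..length p. of_int (height p k))"
proof -
  let ?m = "length p" and ?h = "\<lambda>k. real_of_int (height p k)"
  have "(\<Sum>k=1..?m. ?h (k - 1)) = (\<Sum>k=0..?m. ?h k) - ?h ?m"
  proof (cases ?m)
    case (Suc m)
    then show ?thesis
      using sum.shift_bounds_cl_Suc_ivl[of "\<lambda>k. ?h (k - 1)" 0 m]
      by (simp add: sum.atLeast0_atMost_Suc)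
  qed simp
  also have "\<dots> = (\<Sum>k=1..?m. ?h k)"
    using assms by (simp add: sum.atLeast_Suc_atMost)
  finally have shifted: "(\<Sum>k=1..?m. ?h (k - 1)) = (\<Sum>k=1..?m. ?h k)" .
  have "ar p = ((\<Sum>k=1..?m. ?h (k - 1)) + (\<Sum>k=1..?m. ?h k)) / 2"
    by (simp add: ar_def sum.distrib sum_divide_distrib[symmetric])
  with shifted show ?thesis by simp
qed

definition crossings :: "nat \<Rightarrow> (nat \<Rightarrow> nat) \<Rightarrow> nat \<Rightarrow> nat" where
  "crossings n w k = (\<Sum>i=1..n. of_bool (i \<le> k \<and> k < w i))"

lemma crossings_self:
  assumes "\<forall>i\<in>{1..n}. w i \<le> n"
  shows "crossings n w n = 0"
  unfolding crossings_def by (intro sum.neutral) (use assms in \<open>auto simp: not_less\<close>)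

lemma sum_crossings_eq_dep:
  assumes "\<forall>i\<in>{1..n}. w i \<le> n"
  shows "(\<Sum>k=1..n. crossings n w k) = dep n w"
proof -
  have arc_length: "(\<Sum>k=1..n. of_bool (i \<le> k \<and> k < w i)) = w i - i" if "i \<in> {1..n}" for i
  proof -
    have "w i \<le> n"
      using that assms by blast
    then have "{k\<in>{1..n}. i \<le> k \<and> k < w i} = {i..<w i}"
      using that by auto
    then show ?thesis
      by (simp add: sum.If_cases Int_def)
  qed
  have "(\<Sum>k=1..n. crossings n w k) = (\<Sum>i=1..n. \<Sum>k=1..n. of_bool (i \<le> k \<and> k < w i))"
    unfolding crossings_def by (rule sum.swap)
  also have "\<dots> = (\<Sum>i=1..n. w i - i)"
    by (rule sum.cong[OF refl arc_length])
  also have "\<dots> = dep n w"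
    unfolding dep_def by (rule sum.mono_neutral_right) auto
  finally show ?thesis .
qed

text \<open>Passing from gap \<open>k\<close> to gap \<open>k + 1\<close>, the arc starting at \<open>k + 1\<close> may open
  and the arc ending at \<open>k + 1\<close> (which starts at \<open>inv w (k + 1)\<close>) may close.\<close>

lemma crossings_Suc:
  assumes perm: "w permutes {1..n}" and "k < n"
  shows "crossings n w (Suc k) + of_bool (inv w (Suc k) \<le> k)
       = crossings n w k + of_bool (Suc k < w (Suc k))"
proof -
  let ?j = "inv w (Suc k)"
  have j: "?j \<in> {1..n}"
    using assms permutes_inv[OF perm] permutes_in_image by fastforce
  have ends: "w i = Suc k \<longleftrightarrow> i = ?j" for i
    using permutes_inverses[OF perm] by metis
  then have "w ?j = Suc k"
    by simp
  have pointwise: "of_bool (i \<le> Suc k \<and> Suc k < w i) + (if i = ?j then of_bool (?j \<le> k) else 0)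
      = of_bool (i \<le> k \<and> k < w i) + (if i = Suc k then of_bool (Suc k < w (Suc k)) else 0 :: nat)"
    for i
    using ends[of i] \<open>w ?j = Suc k\<close> by (auto simp: le_Suc_eq)
  have "(\<Sum>i=1..n. of_bool (i \<le> Suc k \<and> Suc k < w i) + (if i = ?j then of_bool (?j \<le> k) else 0))
      = (\<Sum>i=1..n. of_bool (i \<le> k \<and> k < w i)
                     + (if i = Suc k then of_bool (Suc k < w (Suc k)) else 0 :: nat))"
    using pointwise by (rule sum.cong[OF refl])
  then show ?thesis
    unfolding crossings_def sum.distrib sum.delta[OF finite_atLeastAtMost]
    using j \<open>k < n\<close> by simp
qed

lemma length_phi [simp]: "length (phi n w) = n"
  by (simp add: phi_def)

lemma step_val_phi_nth:
  assumes perm: "w permutes {1..n}" and "k < n"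
  shows "step_val (phi n w ! k)
       = of_bool (Suc k < w (Suc k)) - of_bool (inv w (Suc k) \<le> k)"
proof -
  have fixpoint: "w (Suc k) = Suc k \<longleftrightarrow> inv w (Suc k) = Suc k"
    using permutes_inverses[OF perm] by metis
  have "phi n w ! k = (if inv w (Suc k) > Suc k \<and> Suc k < w (Suc k) then U
                       else if inv w (Suc k) < Suc k \<and> Suc k > w (Suc k) then D else H)"
    using \<open>k < n\<close> by (simp del: upt_Suc add: phi_def nth_map_upt)
  with fixpoint show ?thesis
    by (auto simp: step_val_def less_Suc_eq_le)
qed

lemma height_phi_eq_crossings:
  assumes perm: "w permutes {1..n}" and "k \<le> n"
  shows "height (phi n w) k = crossings n w k"
  using \<open>k \<le> n\<close>
proof (induction k)
  case 0
  show ?case by (simp add: crossings_def)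
next
  case (Suc k)
  then have "k < n" by simp
  have "int (crossings n w (Suc k)) + of_bool (inv w (Suc k) \<le> k)
      = int (crossings n w k) + of_bool (Suc k < w (Suc k))"
    using arg_cong[OF crossings_Suc[OF perm \<open>k < n\<close>], of int] by simp
  moreover have "height (phi n w) (Suc k) = height (phi n w) k + step_val (phi n w ! k)"
    using \<open>k < n\<close> by (simp add: height_Suc)
  ultimately show ?case
    using Suc.IH \<open>k < n\<close> step_val_phi_nth[OF perm \<open>k < n\<close>] by simp
qed

theorem proposition3p2:
  fixes n :: nat and w :: "nat \<Rightarrow> nat"
  assumes "n \<ge> 1" and "w permutes {1..n}"
  shows "real (dep n w) = ar (phi n w)"
proof -
  have bounded: "\<forall>i\<in>{1..n}. w i \<le> n"
    using permutes_in_image[OF assms(2)] atLeastAtMost_iff by blast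
  have heights: "height (phi n w) k = crossings n w k" if "k \<le> n" for k
    using height_phi_eq_crossings[OF assms(2) that] .
  have "height (phi n w) (length (phi n w)) = 0"
    using heights[of n] crossings_self[OF bounded] by simp
  then have "ar (phi n w) = (\<Sum>k=1..n. of_int (height (phi n w) k))"
    by (simp add: ar_eq_sum_height)
  also have "\<dots> = (\<Sum>k=1..n. real (crossings n w k))"
    by (rule sum.cong) (simp_all add: heights)
  also have "\<dots> = real (dep n w)"
    unfolding of_nat_sum[symmetric] sum_crossings_eq_dep[OF bounded] ..
  finally show ?thesis ..
qed

end
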